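(* Let $n\ge 2$, let $h=h^{(n)}$ be the ordered roots of $\mathrm{He}_n$ normalized to mean $0$ and variance $1$, and let $s=s_n(h)$. Then $s$ is an eigenvector of the Hermite coupling matrix $E_n$ with eigenvalue $2^{-1/2}$: $E_n s=2^{-1/2}s$.
   Context: For a monic polynomial with simple real roots $\alpha_1<\dots<\alpha_n$, the score vector is $s_n(\alpha)_i=\sum_{j\ne i}\frac{1}{\alpha_i-\alpha_j}$. The finite free additive convolution $\boxplus_n$ of monic real-rooted degree-$n$ polynomials $f(x)=\sum(-1)^ka_kx^{n-k}$, $g(x)=\sum(-1)^kb_kx^{n-k}$ is the polynomial with coefficients $c_k=\sum_{i+j=k}\frac{(n-i)!(n-j)!}{n!(n-k)!}a_ib_j$; the root map $\Omega_{\boxplus_n}(\alpha,\beta)$ returns the sorted roots of $f\boxplus_n g$ from the root vectors $\alpha,\beta$ of $f,g$. The Hermite coupling matrix is $E_n:=\frac{\partial\,\Omega_{\boxplus_n}(\cdot,h)}{\partial\alpha}\big|_{\alpha=h}$. It is known that $\Omega_{\boxplus_n}(h,h)=\sqrt2\,h$. *)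

theory Defs
  imports "HOL-Analysis.Analysis" "HOL-Computational_Algebra.Polynomial"
begin

fun hermite_He :: "nat \<Rightarrow> real poly" where
  "hermite_He 0 = 1"
| "hermite_He (Suc 0) = [:0, 1:]"
| "hermite_He (Suc (Suc k)) =
     [:0, 1:] * hermite_He (Suc k) - smult (real (Suc k)) (hermite_He k)"

text \<open>Sorted (ascending, with multiplicity) list of real roots of a real-rooted polynomial.
  Vectors of length n are functions nat => real, only indices i < n matter.\<close>
definition sorted_roots :: "real poly \<Rightarrow> nat \<Rightarrow> real" where
  "sorted_roots p = (\<lambda>i. (THE xs. sorted xs \<and> length xs = degree p \<and>
       p = smult (lead_coeff p) (\<Prod>x\<leftarrow>xs. [:- x, 1:])) ! i)"

definition root_poly :: "nat \<Rightarrow> (nat \<Rightarrow> real) \<Rightarrow> real poly" where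
  "root_poly n \<alpha> = (\<Prod>i<n. [:- \<alpha> i, 1:])"

text \<open>a_k with f(x) = sum_k (-1)^k a_k x^(n-k).\<close>
definition sgn_coeff :: "nat \<Rightarrow> real poly \<Rightarrow> nat \<Rightarrow> real" where
  "sgn_coeff n f k = (-1) ^ k * coeff f (n - k)"

definition ffconv :: "nat \<Rightarrow> real poly \<Rightarrow> real poly \<Rightarrow> real poly" where
  "ffconv n f g = (\<Sum>k\<le>n. monom ((-1) ^ k *
      (\<Sum>i\<le>k. (fact (n - i) * fact (n - (k - i)) / (fact n * fact (n - k)))
               * sgn_coeff n f i * sgn_coeff n g (k - i))) (n - k))"

definition Omega :: "nat \<Rightarrow> (nat \<Rightarrow> real) \<Rightarrow> (nat \<Rightarrow> real) \<Rightarrow> nat \<Rightarrow> real" where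
  "Omega n \<alpha> \<beta> = sorted_roots (ffconv n (root_poly n \<alpha>) (root_poly n \<beta>))"

definition herm_norm :: "nat \<Rightarrow> nat \<Rightarrow> real" where
  "herm_norm n = (let r = sorted_roots (hermite_He n);
                      m = (\<Sum>i<n. r i) / real n;
                      v = (\<Sum>i<n. (r i - m)\<^sup>2) / real n
                  in (\<lambda>i. (r i - m) / sqrt v))"

definition score :: "nat \<Rightarrow> (nat \<Rightarrow> real) \<Rightarrow> nat \<Rightarrow> real" where
  "score n \<alpha> i = (\<Sum>j\<in>{..<n} - {i}. 1 / (\<alpha> i - \<alpha> j))"

definition perturb :: "(nat \<Rightarrow> real) \<Rightarrow> nat \<Rightarrow> real \<Rightarrow> nat \<Rightarrow> real" where
  "perturb \<alpha> j t = (\<lambda>k. \<alpha> k + (if k = j then t else 0))"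

definition hermite_coupling :: "nat \<Rightarrow> nat \<Rightarrow> nat \<Rightarrow> real" where
  "hermite_coupling n i j =
     deriv (\<lambda>t. Omega n (perturb (herm_norm n) j t) (herm_norm n) i) 0"

end

theory Submission
  imports Defs
begin

(*
  Written as a differential operator, the finite free convolution is
  f [+]_n g = (1/n!) sum_m f_m m! D^(n-m) g; it is linear in f and commutes with D.
  He_n = exp(-D^2/2) x^n, and exp(a D^2) x^n [+]_n exp(b D^2) x^n = exp((a+b) D^2) x^n.
  Since h is a rescaling of the roots of He_n, R = prod_i (x - h_i) is exp(a D^2) x^n
  for some a, so A = R [+]_n R = exp(2a D^2) x^n has the roots y = sqrt 2 h.

  Moving h_j by t replaces R by R - t R_j with R_j = R / (x - h_j). The simple root y_i
  of A then moves with velocity (R_j [+]_n R)(y_i) / A'(y_i). The score identity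
  sum_j s_j R_j = R''/2 passes through [+]_n R and gives
  sum_j (E_n)_ij s_j = A''(y_i) / (2 A'(y_i)) = s(y)_i = s(h)_i / sqrt 2.
*)

section \<open>Polynomials with prescribed roots\<close>

definition root_poly_except :: "nat \<Rightarrow> (nat \<Rightarrow> real) \<Rightarrow> nat \<Rightarrow> real poly" where
  "root_poly_except n \<alpha> j = (\<Prod>l\<in>{..<n}-{j}. [:- \<alpha> l, 1:])"

lemma degree_root_poly [simp]: "degree (root_poly n \<alpha>) = n"
  by (simp add: root_poly_def degree_prod_eq_sum_degree)

lemma lead_coeff_root_poly [simp]: "lead_coeff (root_poly n \<alpha>) = 1"
  by (simp add: root_poly_def lead_coeff_prod)

lemma coeff_root_poly_top [simp]: "coeff (root_poly n \<alpha>) n = 1"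
  using lead_coeff_root_poly[of n \<alpha>] by (simp del: lead_coeff_root_poly)

lemma degree_root_poly_except: "j < n \<Longrightarrow> degree (root_poly_except n \<alpha> j) = n - 1"
  by (simp add: root_poly_except_def degree_prod_eq_sum_degree)

lemma root_poly_split: "k < n \<Longrightarrow> root_poly n \<alpha> = [:- \<alpha> k, 1:] * root_poly_except n \<alpha> k"
  by (simp add: root_poly_def root_poly_except_def prod.remove)

lemma poly_root_poly_eq_0: "k < n \<Longrightarrow> poly (root_poly n \<alpha>) (\<alpha> k) = 0"
  by (simp add: root_poly_split)

lemma poly_root_poly_except_eq_0:
  "i < n \<Longrightarrow> i \<noteq> j \<Longrightarrow> poly (root_poly_except n \<alpha> j) (\<alpha> i) = 0"
  by (auto simp: root_poly_except_def poly_prod)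

lemma poly_root_poly_except_nonzero:
  "inj_on \<alpha> {..<n} \<Longrightarrow> i < n \<Longrightarrow> poly (root_poly_except n \<alpha> i) (\<alpha> i) \<noteq> 0"
  by (auto simp: root_poly_except_def poly_prod dest: inj_onD)

lemma card_le_degree_of_roots:
  fixes p :: "real poly"
  assumes "p \<noteq> 0" "inj_on z {..<n}" "\<And>i. i < n \<Longrightarrow> poly p (z i) = 0"
  shows "n \<le> degree p"
proof -
  have "n = card (z ` {..<n})" using assms(2) by (simp add: card_image)
  also have "\<dots> \<le> card {x. poly p x = 0}"
    using assms by (intro card_mono poly_roots_finite) auto
  also have "\<dots> \<le> degree p" using assms(1) by (rule card_poly_roots_bound)
  finally show ?thesis .
qed

lemma monic_eq_root_poly_of_roots:
  fixes p :: "real poly"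
  assumes "lead_coeff p = 1" "degree p = n" "inj_on z {..<n}"
    and "\<And>i. i < n \<Longrightarrow> poly p (z i) = 0"
  shows "p = root_poly n z"
proof (rule ccontr)
  assume "p \<noteq> root_poly n z"
  then have "n \<le> degree (p - root_poly n z)"
    using assms(3,4) by (intro card_le_degree_of_roots) (auto simp: poly_root_poly_eq_0)
  moreover have "degree (p - root_poly n z) < n"
  proof (rule degree_lessI)
    show "p - root_poly n z \<noteq> 0 \<or> n > 0"
      using \<open>p \<noteq> root_poly n z\<close> by simp
    show "\<forall>k\<ge>n. coeff (p - root_poly n z) k = 0"
      using assms(1,2) by (auto simp: le_less coeff_eq_0)
  qed
  ultimately show False by simp
qed

lemma coeff_root_poly_pred: "coeff (root_poly (Suc m) \<rho>) m = - (\<Sum>i<Suc m. \<rho> i)"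
proof (induction m)
  case (Suc m)
  have "root_poly (Suc (Suc m)) \<rho> = [:- \<rho> (Suc m), 1:] * root_poly (Suc m) \<rho>"
    by (simp add: root_poly_def mult.commute)
  then show ?case
    using Suc coeff_root_poly_top[of "Suc m" \<rho>] by (simp del: coeff_root_poly_top)
qed (simp add: root_poly_def)

lemma pcompose_root_poly_scale:
  assumes "c \<noteq> 0"
  shows "pcompose (root_poly n \<rho>) [:0, c:] = smult (c ^ n) (root_poly n (\<lambda>i. \<rho> i / c))"
proof -
  have "pcompose (root_poly n \<rho>) [:0, c:] = (\<Prod>i<n. smult c [:- (\<rho> i / c), 1:])"
    unfolding root_poly_def pcompose_prod
    by (intro prod.cong refl) (use assms in \<open>simp add: pcompose_pCons\<close>)
  also have "\<dots> = smult (c ^ n) (root_poly n (\<lambda>i. \<rho> i / c))"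
    by (simp only: prod_smult prod_constant card_lessThan root_poly_def)
  finally show ?thesis .
qed

lemma sorted_roots_root_poly:
  assumes "strict_mono_on {..<n} z" "i < n"
  shows "sorted_roots (root_poly n z) i = z i"
proof -
  define zs where "zs = map z [0..<n]"
  have zs: "root_poly n z = (\<Prod>x\<leftarrow>zs. [:- x, 1:])"
    unfolding root_poly_def zs_def
    by (simp add: prod.distinct_set_conv_list[symmetric] lessThan_atLeast0 o_def)
  have sorted_zs: "sorted_wrt (<) zs"
    using assms(1) by (auto simp: zs_def sorted_wrt_iff_nth_less strict_mono_on_def)
  have roots_prod: "poly (\<Prod>x\<leftarrow>xs. [:- x, 1:]) a = 0 \<longleftrightarrow> a \<in> set xs" for xs and a :: real
    by (induction xs) auto
  have "(THE xs. sorted xs \<and> length xs = n \<and> root_poly n z = (\<Prod>x\<leftarrow>xs. [:- x, 1:])) = zs"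
  proof (rule the_equality)
    show "sorted zs \<and> length zs = n \<and> root_poly n z = (\<Prod>x\<leftarrow>zs. [:- x, 1:])"
      using sorted_zs zs by (simp add: zs_def strict_sorted_imp_sorted)
  next
    fix xs assume xs: "sorted xs \<and> length xs = n \<and> root_poly n z = (\<Prod>x\<leftarrow>xs. [:- x, 1:])"
    then have "(\<Prod>x\<leftarrow>xs. [:- x, 1:]) = (\<Prod>x\<leftarrow>zs. [:- x, 1:])" using zs by simp
    then have "set xs = set zs" using roots_prod by (metis equalityI subsetI)
    moreover have "distinct zs" using sorted_zs by (simp add: strict_sorted_iff)
    moreover from calculation have "distinct xs"
      using xs by (metis card_distinct distinct_card length_map length_upt zs_def diff_zero)
    ultimately show "xs = zs"
      using xs sorted_zs by (metis sorted_distinct_set_unique strict_sorted_imp_sorted)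
  qed
  then show ?thesis using assms(2) by (simp add: sorted_roots_def zs_def)
qed

lemma monic_eq_root_poly_of_sign_changes:
  fixes p :: "real poly"
  assumes "lead_coeff p = 1" "degree p = n"
    and lo_hi: "\<And>i. i < n \<Longrightarrow> lo i < hi i"
    and ordered: "\<And>i j. i < j \<Longrightarrow> j < n \<Longrightarrow> hi i \<le> lo j"
    and sign_change: "\<And>i. i < n \<Longrightarrow> poly p (lo i) * poly p (hi i) < 0"
  obtains z where "strict_mono_on {..<n} z" "\<And>i. i < n \<Longrightarrow> lo i < z i \<and> z i < hi i"
    "p = root_poly n z"
proof -
  have "\<exists>x. i < n \<longrightarrow> lo i < x \<and> x < hi i \<and> poly p x = 0" for i
    using lo_hi sign_change poly_IVT by blast
  then obtain z where z: "\<And>i. i < n \<Longrightarrow> lo i < z i \<and> z i < hi i \<and> poly p (z i) = 0"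
    by metis
  have mono: "strict_mono_on {..<n} z"
  proof (rule strict_mono_onI)
    fix i j assume "i \<in> {..<n}" "j \<in> {..<n}" "i < j"
    then show "z i < z j" using z[of i] z[of j] ordered[of i j] by force
  qed
  then have "p = root_poly n z"
    using assms(1,2) z by (intro monic_eq_root_poly_of_roots) (auto intro: strict_mono_on_imp_inj_on)
  with mono z that show ?thesis by blast
qed

lemma pderiv_linear_factor_mult: "pderiv ([:- a, 1:] * q) = q + [:- a, 1:] * pderiv (q :: real poly)"
  by (simp only: pderiv_mult pderiv_pCons pderiv_0) simp

lemma poly_pderiv_root_poly_at_root:
  "k < n \<Longrightarrow> poly (pderiv (root_poly n \<alpha>)) (\<alpha> k) = poly (root_poly_except n \<alpha> k) (\<alpha> k)"
  by (simp only: root_poly_split pderiv_linear_factor_mult) simp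

lemma poly_pderiv_root_poly_except_at_root:
  assumes "inj_on \<alpha> {..<n}" "i < n"
  shows "poly (pderiv (root_poly_except n \<alpha> i)) (\<alpha> i)
       = poly (root_poly_except n \<alpha> i) (\<alpha> i) * score n \<alpha> i"
proof -
  let ?T = "{..<n} - {i}"
  have "poly (pderiv (root_poly_except n \<alpha> i)) (\<alpha> i) = (\<Sum>j\<in>?T. \<Prod>l\<in>?T-{j}. \<alpha> i - \<alpha> l)"
    by (simp add: root_poly_except_def pderiv_prod poly_sum poly_prod pderiv_pCons)
  also have "\<dots> = (\<Sum>j\<in>?T. (\<Prod>l\<in>?T. \<alpha> i - \<alpha> l) * (1 / (\<alpha> i - \<alpha> j)))"
  proof (intro sum.cong refl)
    fix j assume j: "j \<in> ?T"
    then have "\<alpha> i - \<alpha> j \<noteq> 0"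
      using assms by (auto dest: inj_onD)
    moreover have "(\<Prod>l\<in>?T. \<alpha> i - \<alpha> l) = (\<alpha> i - \<alpha> j) * (\<Prod>l\<in>?T-{j}. \<alpha> i - \<alpha> l)"
      using j by (simp add: prod.remove)
    ultimately show "(\<Prod>l\<in>?T-{j}. \<alpha> i - \<alpha> l) = (\<Prod>l\<in>?T. \<alpha> i - \<alpha> l) * (1 / (\<alpha> i - \<alpha> j))"
      by simp
  qed
  also have "\<dots> = poly (root_poly_except n \<alpha> i) (\<alpha> i) * score n \<alpha> i"
    by (simp add: root_poly_except_def score_def poly_prod sum_distrib_left)
  finally show ?thesis .
qed

lemma poly_pderiv2_root_poly_at_root:
  assumes "inj_on \<alpha> {..<n}" "i < n"
  shows "poly (pderiv (pderiv (root_poly n \<alpha>))) (\<alpha> i)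
       = 2 * poly (root_poly_except n \<alpha> i) (\<alpha> i) * score n \<alpha> i"
proof -
  have "pderiv (pderiv (root_poly n \<alpha>))
      = [:- \<alpha> i, 1:] * pderiv (pderiv (root_poly_except n \<alpha> i))
        + (pderiv (root_poly_except n \<alpha> i) + pderiv (root_poly_except n \<alpha> i))"
    by (simp only: root_poly_split[OF assms(2)] pderiv_linear_factor_mult pderiv_add)
  then show ?thesis
    using poly_pderiv_root_poly_except_at_root[OF assms] by simp
qed

lemma sum_score_smult_root_poly_except:
  assumes inj: "inj_on \<alpha> {..<n}"
  shows "(\<Sum>j<n. smult (score n \<alpha> j) (root_poly_except n \<alpha> j))
       = smult (1/2) (pderiv (pderiv (root_poly n \<alpha>)))"
    (is "?L = ?R")
proof (cases "n = 0")
  case True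
  then show ?thesis by (simp add: root_poly_def)
next
  case False
  \<comment> \<open>Both sides have degree below n and agree at the n distinct nodes.\<close>
  have roots: "poly (?L - ?R) (\<alpha> i) = 0" if i: "i < n" for i
  proof -
    have "poly ?L (\<alpha> i) = (\<Sum>j<n. score n \<alpha> j * poly (root_poly_except n \<alpha> j) (\<alpha> i))"
      by (simp add: poly_sum)
    also have "\<dots> = score n \<alpha> i * poly (root_poly_except n \<alpha> i) (\<alpha> i)"
      using i by (subst sum.remove[of _ i]) (auto simp: poly_root_poly_except_eq_0)
    finally show ?thesis
      using poly_pderiv2_root_poly_at_root[OF inj i] by simp
  qed
  have "degree ?L \<le> n - 1"
    by (intro degree_sum_le order.trans[OF degree_smult_le]) (auto simp: degree_root_poly_except)
  moreover have "degree ?R \<le> n - 1"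
    by (simp add: degree_pderiv)
  ultimately have "degree (?L - ?R) < n"
    using False by (meson degree_diff_le diff_less le_less_trans not_gr_zero zero_less_one)
  then have "?L - ?R = 0"
    using card_le_degree_of_roots[OF _ inj roots] by (meson not_le)
  then show ?thesis by simp
qed

lemma score_scale: "c \<noteq> 0 \<Longrightarrow> score n (\<lambda>i. c * \<alpha> i) i = score n \<alpha> i / c"
  by (simp add: score_def sum_divide_distrib mult.commute flip: right_diff_distrib)

lemma sign_root_poly_except_at_root:
  assumes mono: "strict_mono_on {..<n} \<rho>" and k: "k < n"
  shows "(-1) ^ (n - Suc k) * poly (root_poly_except n \<rho> k) (\<rho> k) > 0"
proof -
  have split: "{..<n} - {k} = {..<k} \<union> {k<..<n}" using k by auto
  have below: "(\<Prod>i<k. \<rho> k - \<rho> i) > 0"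
    using mono k by (intro prod_pos) (auto simp: strict_mono_on_def)
  have above: "(\<Prod>i\<in>{k<..<n}. \<rho> i - \<rho> k) > 0"
    using mono by (intro prod_pos) (auto simp: strict_mono_on_def)
  have "(\<Prod>i\<in>{k<..<n}. \<rho> k - \<rho> i) = (-1) ^ (n - Suc k) * (\<Prod>i\<in>{k<..<n}. \<rho> i - \<rho> k)"
    using prod_uminus[of "\<lambda>i. \<rho> i - \<rho> k" "{k<..<n}"] by simp
  moreover have "poly (root_poly_except n \<rho> k) (\<rho> k)
      = (\<Prod>i<k. \<rho> k - \<rho> i) * (\<Prod>i\<in>{k<..<n}. \<rho> k - \<rho> i)"
    unfolding root_poly_except_def poly_prod split by (subst prod.union_disjoint) auto
  ultimately have "(-1) ^ (n - Suc k) * poly (root_poly_except n \<rho> k) (\<rho> k)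
      = ((-1) ^ (n - Suc k) * (-1) ^ (n - Suc k)) * ((\<Prod>i<k. \<rho> k - \<rho> i) * (\<Prod>i\<in>{k<..<n}. \<rho> i - \<rho> k))"
    by (simp only: mult_ac)
  also have "\<dots> > 0"
    using below above by (simp flip: power_add)
  finally show ?thesis .
qed

section \<open>Roots under a small perturbation\<close>

lemma root_poly_diff_smult_monic:
  assumes "degree B < n"
  shows "degree (root_poly n y - smult t B) = n" "lead_coeff (root_poly n y - smult t B) = 1"
proof -
  have "degree (- smult t B) < degree (root_poly n y)"
    using assms degree_smult_le[of t B] by simp
  then show deg: "degree (root_poly n y - smult t B) = n"
    by (simp only: diff_conv_add_uminus degree_add_eq_left degree_root_poly)
  have "coeff B n = 0"
    using assms by (simp add: coeff_eq_0)
  then show "lead_coeff (root_poly n y - smult t B) = 1"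
    by (simp add: deg)
qed

lemma poly_root_poly_sign_change:
  assumes k: "k < n" and e: "e \<noteq> 0" and gap: "\<And>l. l < n \<Longrightarrow> l \<noteq> k \<Longrightarrow> \<bar>e\<bar> < \<bar>y k - y l\<bar>"
  shows "poly (root_poly n y) (y k - e) * poly (root_poly n y) (y k + e) < 0"
proof -
  have "poly (root_poly n y) (y k - e) * poly (root_poly n y) (y k + e) = (\<Prod>l<n. (y k - y l)\<^sup>2 - e\<^sup>2)"
    by (simp add: root_poly_def poly_prod flip: prod.distrib) (simp add: power2_eq_square algebra_simps)
  also have "\<dots> = - e\<^sup>2 * (\<Prod>l\<in>{..<n} - {k}. (y k - y l)\<^sup>2 - e\<^sup>2)"
    using k by (simp add: prod.remove)
  also have "\<dots> < 0"
  proof -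
    have "(\<Prod>l\<in>{..<n} - {k}. (y k - y l)\<^sup>2 - e\<^sup>2) > 0"
      using gap by (intro prod_pos) (auto dest!: power2_strict_mono)
    then show ?thesis using e by (simp add: mult_neg_pos)
  qed
  finally show ?thesis .
qed

lemma separation_radius:
  fixes y :: "nat \<Rightarrow> real"
  assumes inj: "inj_on y {..<n}" and e: "e > 0"
  obtains \<delta> where "0 < \<delta>" "\<delta> < e" "\<And>k l. k < n \<Longrightarrow> l < n \<Longrightarrow> k \<noteq> l \<Longrightarrow> 2 * \<delta> \<le> \<bar>y k - y l\<bar>"
proof -
  define gaps where "gaps = {\<bar>y k - y l\<bar> | k l. k < n \<and> l < n \<and> k \<noteq> l}"
  have "finite gaps"
    unfolding gaps_def by (rule finite_subset[of _ "(\<lambda>(k, l). \<bar>y k - y l\<bar>) ` ({..<n} \<times> {..<n})"]) auto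
  moreover have "\<forall>g\<in>gaps. g > 0"
    using inj by (auto simp: gaps_def dest: inj_onD)
  ultimately have "Min (insert e gaps) > 0"
    using e by simp
  moreover have "Min (insert e gaps) \<le> e"
    using \<open>finite gaps\<close> by (intro Min_le) auto
  moreover have "Min (insert e gaps) \<le> \<bar>y k - y l\<bar>" if "k < n" "l < n" "k \<noteq> l" for k l
    using that \<open>finite gaps\<close> by (auto simp: gaps_def intro!: Min_le)
  ultimately show ?thesis
    by (intro that[of "Min (insert e gaps) / 2"]) auto
qed

lemma eventually_sorted_roots_diff_smult_near:
  fixes n i :: nat and y :: "nat \<Rightarrow> real" and B :: "real poly"
  defines "F t \<equiv> root_poly n y - smult t B"
  assumes mono: "strict_mono_on {..<n} y" and B: "degree B < n" and i: "i < n" and e: "e > 0"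
  shows "\<forall>\<^sub>F t in at 0. \<bar>sorted_roots (F t) i - y i\<bar> < e \<and> poly (F t) (sorted_roots (F t) i) = 0"
proof -
  obtain \<delta> where \<delta>: "0 < \<delta>" "\<delta> < e"
    and gap: "\<And>k l. k < n \<Longrightarrow> l < n \<Longrightarrow> k \<noteq> l \<Longrightarrow> 2 * \<delta> \<le> \<bar>y k - y l\<bar>"
    using separation_radius[OF strict_mono_on_imp_inj_on[OF mono] e] by blast
  have "\<forall>\<^sub>F t in at 0. poly (F t) (y k - \<delta>) * poly (F t) (y k + \<delta>) < 0" if k: "k < n" for k
  proof (rule order_tendstoD(2))
    show "((\<lambda>t. poly (F t) (y k - \<delta>) * poly (F t) (y k + \<delta>)) \<longlongrightarrow>
        poly (root_poly n y) (y k - \<delta>) * poly (root_poly n y) (y k + \<delta>)) (at 0)"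
      unfolding F_def poly_diff poly_smult by (auto intro!: tendsto_eq_intros)
    show "poly (root_poly n y) (y k - \<delta>) * poly (root_poly n y) (y k + \<delta>) < 0"
    proof (rule poly_root_poly_sign_change[OF k])
      show "\<delta> \<noteq> 0" using \<delta> by simp
      show "\<bar>\<delta>\<bar> < \<bar>y k - y l\<bar>" if "l < n" "l \<noteq> k" for l
        using that gap[of k l] k \<delta> by simp
    qed
  qed
  then have "\<forall>\<^sub>F t in at 0. \<forall>k\<in>{..<n}. poly (F t) (y k - \<delta>) * poly (F t) (y k + \<delta>) < 0"
    by (intro eventually_ball_finite) auto
  \<comment> \<open>The persisting sign changes trap one root of F t in each interval around y k.\<close>
  then show ?thesis
  proof (rule eventually_mono)
    fix t assume sign_change: "\<forall>k\<in>{..<n}. poly (F t) (y k - \<delta>) * poly (F t) (y k + \<delta>) < 0"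
    obtain z where z_mono: "strict_mono_on {..<n} z" and z: "\<And>k. k < n \<Longrightarrow> y k - \<delta> < z k \<and> z k < y k + \<delta>"
      and Fz: "F t = root_poly n z"
    proof (rule monic_eq_root_poly_of_sign_changes)
      show "lead_coeff (F t) = 1" "degree (F t) = n"
        using root_poly_diff_smult_monic[OF B] by (simp_all add: F_def)
      show "y k - \<delta> < y k + \<delta>" for k
        using \<delta> by simp
      show "y k + \<delta> \<le> y l - \<delta>" if "k < l" "l < n" for k l
        using that gap[of l k] strict_mono_onD[OF mono, of k l] by simp
    qed (use sign_change in auto)
    have "sorted_roots (F t) i = z i"
      using Fz sorted_roots_root_poly[OF z_mono i] by simp
    moreover have "\<bar>z i - y i\<bar> < e"
      using z[OF i] \<delta> by (simp add: abs_less_iff)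
    ultimately show "\<bar>sorted_roots (F t) i - y i\<bar> < e \<and> poly (F t) (sorted_roots (F t) i) = 0"
      using Fz i by (simp add: poly_root_poly_eq_0)
  qed
qed

lemma sorted_roots_diff_smult_has_derivative:
  fixes y :: "nat \<Rightarrow> real" and B :: "real poly"
  assumes mono: "strict_mono_on {..<n} y" and B: "degree B < n" and i: "i < n"
  shows "((\<lambda>t. sorted_roots (root_poly n y - smult t B) i) has_real_derivative
           poly B (y i) / poly (root_poly_except n y i) (y i)) (at 0)"
proof -
  define w where "w t = sorted_roots (root_poly n y - smult t B) i" for t
  define Q where "Q = root_poly_except n y i"
  note near = eventually_sorted_roots_diff_smult_near[OF mono B i]
  have w0: "w 0 = y i"
    using sorted_roots_root_poly[OF mono i] by (simp add: w_def)
  have w_lim: "(w \<longlongrightarrow> y i) (at 0)"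
  proof (rule tendstoI)
    fix e :: real assume "e > 0"
    show "\<forall>\<^sub>F t in at 0. dist (w t) (y i) < e"
      using near[OF \<open>e > 0\<close>] by (rule eventually_mono) (simp add: w_def dist_real_def)
  qed
  have Q_nonzero: "poly Q (y i) \<noteq> 0"
    unfolding Q_def using strict_mono_on_imp_inj_on[OF mono] i by (rule poly_root_poly_except_nonzero)
  have Q_lim: "((\<lambda>t. poly Q (w t)) \<longlongrightarrow> poly Q (y i)) (at 0)"
    by (intro tendsto_intros w_lim)
  have "\<forall>\<^sub>F t in at (0::real). t \<noteq> 0"
    by (simp add: eventually_at_filter)
  then have "\<forall>\<^sub>F t in at 0. poly B (w t) / poly Q (w t) = (w t - w 0) / (t - 0)"
    using tendsto_imp_eventually_ne[OF Q_lim Q_nonzero] near[OF zero_less_one]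
  proof eventually_elim
    case (elim t)
    have "poly (root_poly n y) (w t) = (w t - y i) * poly Q (w t)"
      by (simp add: root_poly_split[OF i] Q_def algebra_simps)
    moreover have "poly (root_poly n y) (w t) = t * poly B (w t)"
      using elim(3) by (simp add: w_def)
    ultimately have "(w t - y i) * poly Q (w t) = t * poly B (w t)"
      by simp
    then show ?case
      using elim(1,2) w0 by (simp add: field_simps)
  qed
  moreover have "((\<lambda>t. poly B (w t) / poly Q (w t)) \<longlongrightarrow> poly B (y i) / poly Q (y i)) (at 0)"
    by (intro tendsto_intros w_lim Q_nonzero)
  ultimately have "((\<lambda>t. (w t - w 0) / (t - 0)) \<longlongrightarrow> poly B (y i) / poly Q (y i)) (at 0)"
    by (rule Lim_transform_eventually[rotated])
  then show ?thesis
    by (simp add: has_field_derivative_iff w_def Q_def)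
qed

section \<open>The finite free convolution as a differential operator\<close>

lemma coeff_higher_pderiv_fact:
  "coeff ((pderiv ^^ j) p) q = coeff p (q + j) * fact (q + j) / fact q" for p :: "real poly"
proof (induction j arbitrary: q)
  case (Suc j)
  have "coeff ((pderiv ^^ Suc j) p) q = of_nat (Suc q) * coeff ((pderiv ^^ j) p) (Suc q)"
    by (simp add: coeff_pderiv)
  also have "\<dots> = coeff p (q + Suc j) * fact (q + Suc j) / fact q"
    by (simp add: Suc.IH field_simps del: of_nat_Suc)
  finally show ?case .
qed simp

lemma higher_pderiv_eq_0: "degree p < j \<Longrightarrow> (pderiv ^^ j) p = 0" for p :: "real poly"
  by (rule poly_eqI) (simp add: coeff_higher_pderiv_fact coeff_eq_0)

lemma pderiv_sum: "pderiv (\<Sum>i\<in>S. f i) = (\<Sum>i\<in>S. pderiv (f i))"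
  by (induction S rule: infinite_finite_induct) (simp_all add: pderiv_add)

lemma smult_sum_right: "smult c (\<Sum>i\<in>S. f i) = (\<Sum>i\<in>S. smult c (f i))"
  by (induction S rule: infinite_finite_induct) (simp_all add: smult_add_right)

lemma coeff_ffconv:
  "coeff (ffconv n f g) q = (if q \<le> n then
     (-1) ^ (n - q) * (\<Sum>i\<le>n - q. fact (n - i) * fact (n - (n - q - i)) / (fact n * fact q)
        * sgn_coeff n f i * sgn_coeff n g (n - q - i)) else 0)"
proof -
  have "coeff (ffconv n f g) q = (\<Sum>k\<le>n. if k = n - q \<and> q \<le> n then (-1) ^ k *
      (\<Sum>i\<le>k. (fact (n - i) * fact (n - (k - i)) / (fact n * fact (n - k)))
               * sgn_coeff n f i * sgn_coeff n g (k - i)) else 0)"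
    unfolding ffconv_def coeff_sum coeff_monom by (intro sum.cong) auto
  then show ?thesis
    by (cases "q \<le> n") (simp_all only: sum.delta finite_atMost, simp_all)
qed

lemma degree_ffconv: "degree (ffconv n f g) \<le> n"
  by (rule degree_le) (simp add: coeff_ffconv)

lemma coeff_ffconv_top: "coeff (ffconv n f g) n = coeff f n * coeff g n"
  by (simp add: coeff_ffconv sgn_coeff_def)

lemma ffconv_eq_sum_higher_pderiv:
  assumes dg: "degree g \<le> n"
  shows "ffconv n f g = (\<Sum>m\<le>n. smult (coeff f m * fact m / fact n) ((pderiv ^^ (n - m)) g))"
proof (rule poly_eqI)
  fix q
  have rhs: "coeff (\<Sum>m\<le>n. smult (coeff f m * fact m / fact n) ((pderiv ^^ (n - m)) g)) q
     = (\<Sum>i\<le>n. coeff f (n - i) * fact (n - i) / fact n * (coeff g (q + i) * fact (q + i) / fact q))"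
    by (simp add: coeff_sum coeff_higher_pderiv_fact)
      (rule sum.reindex_bij_witness[where i="\<lambda>i. n - i" and j="\<lambda>i. n - i"]; auto)
  show "coeff (ffconv n f g) q = coeff (\<Sum>m\<le>n. smult (coeff f m * fact m / fact n) ((pderiv ^^ (n - m)) g)) q"
  proof (cases "q \<le> n")
    case False
    then show ?thesis
      unfolding rhs coeff_ffconv using dg by (simp add: coeff_eq_0)
  next
    case True
    define k where "k = n - q"
    have q: "q = n - k" "k \<le> n" using True by (auto simp: k_def)
    have "(\<Sum>i\<le>n. coeff f (n - i) * fact (n - i) / fact n * (coeff g (q + i) * fact (q + i) / fact q))
        = (\<Sum>i\<le>k. coeff f (n - i) * fact (n - i) / fact n * (coeff g (q + i) * fact (q + i) / fact q))"
      using dg q by (intro sum.mono_neutral_right) (auto intro!: coeff_eq_0)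
    also have "\<dots> = (-1) ^ k * (\<Sum>i\<le>k. fact (n - i) * fact (n - (k - i)) / (fact n * fact q)
        * sgn_coeff n f i * sgn_coeff n g (k - i))"
      unfolding sum_distrib_left
    proof (intro sum.cong refl)
      fix i assume "i \<in> {..k}"
      then have "n - (k - i) = q + i" "(-1::real) ^ k * ((-1) ^ i * (-1) ^ (k - i)) = 1"
        using q by (auto simp flip: power_add power_mult_distrib)
      then show "coeff f (n - i) * fact (n - i) / fact n * (coeff g (q + i) * fact (q + i) / fact q)
        = (-1) ^ k * (fact (n - i) * fact (n - (k - i)) / (fact n * fact q)
          * sgn_coeff n f i * sgn_coeff n g (k - i))"
        by (simp add: sgn_coeff_def field_simps)
    qed
    finally show ?thesis
      unfolding rhs coeff_ffconv using True k_def by simp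
  qed
qed

lemma ffconv_smult: "degree g \<le> n \<Longrightarrow> ffconv n (smult c f) g = smult c (ffconv n f g)"
  by (rule poly_eqI) (simp add: ffconv_eq_sum_higher_pderiv coeff_sum sum_distrib_left mult_ac)

lemma ffconv_diff: "degree g \<le> n \<Longrightarrow> ffconv n (f1 - f2) g = ffconv n f1 g - ffconv n f2 g"
  by (simp add: ffconv_eq_sum_higher_pderiv left_diff_distrib diff_divide_distrib smult_diff_left
      sum_subtractf)

lemma ffconv_sum:
  "degree g \<le> n \<Longrightarrow> ffconv n (\<Sum>j\<in>S. f j) g = (\<Sum>j\<in>S. ffconv n (f j) g)"
  by (induction S rule: infinite_finite_induct)
    (simp_all add: ffconv_eq_sum_higher_pderiv distrib_right add_divide_distrib smult_add_left
      sum.distrib)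

lemma ffconv_pderiv:
  assumes df: "degree f \<le> n" and dg: "degree g \<le> n"
  shows "ffconv n (pderiv f) g = pderiv (ffconv n f g)"
proof -
  define T where "T m = smult (coeff f m * fact m / fact n) ((pderiv ^^ (Suc n - m)) g)" for m
  have T0: "T 0 = 0"
    using dg higher_pderiv_eq_0[of g "Suc n"] by (simp add: T_def del: funpow.simps)
  have "ffconv n (pderiv f) g = (\<Sum>m\<le>n. T (Suc m))"
    unfolding ffconv_eq_sum_higher_pderiv[OF dg] T_def
    by (intro sum.cong refl) (simp add: coeff_pderiv algebra_simps del: of_nat_Suc)
  also have "\<dots> = (\<Sum>m\<le>Suc n. T m)"
    by (subst sum.atMost_Suc_shift) (simp add: T0)
  also have "\<dots> = (\<Sum>m\<le>n. T m)"
    using df by (simp add: T_def coeff_eq_0)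
  also have "\<dots> = pderiv (ffconv n f g)"
    unfolding ffconv_eq_sum_higher_pderiv[OF dg] pderiv_sum T_def
    by (intro sum.cong refl) (simp add: pderiv_smult Suc_diff_le)
  finally show ?thesis .
qed

lemma ffconv_monom:
  assumes "degree g \<le> n"
  shows "ffconv n (monom 1 n) g = g"
proof -
  have "ffconv n (monom 1 n) g = (\<Sum>m\<le>n. if m = n then g else 0)"
    unfolding ffconv_eq_sum_higher_pderiv[OF assms] by (intro sum.cong refl) auto
  then show ?thesis by simp
qed

lemma ffconv_higher_pderiv_monom:
  "degree g \<le> n \<Longrightarrow> ffconv n ((pderiv ^^ j) (monom 1 n)) g = (pderiv ^^ j) g"
proof (induction j)
  case (Suc j)
  have "degree ((pderiv ^^ j) (monom (1::real) n)) \<le> n"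
    by (simp add: degree_higher_pderiv degree_monom_eq)
  with Suc show ?case by (simp add: ffconv_pderiv)
qed (simp add: ffconv_monom)

section \<open>Hermite polynomials as heat flow of monomials\<close>

(* exp(a D^2) x^n; the sum stops at k = n because D^(2k) x^n = 0 for 2k > n. *)
definition heat_monom :: "nat \<Rightarrow> real \<Rightarrow> real poly" where
  "heat_monom n a = (\<Sum>k\<le>n. smult (a ^ k / fact k) ((pderiv ^^ (2 * k)) (monom 1 n)))"

lemma heat_monom_eq_sum:
  assumes "n \<le> N"
  shows "heat_monom n a = (\<Sum>k\<le>N. smult (a ^ k / fact k) ((pderiv ^^ (2 * k)) (monom 1 n)))"
  unfolding heat_monom_def using assms
  by (intro sum.mono_neutral_left) (auto intro!: higher_pderiv_eq_0 simp: degree_monom_eq)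

lemma coeff_heat_monom:
  "coeff (heat_monom n a) q = (\<Sum>k\<le>n. if q + 2 * k = n then a ^ k / fact k * (fact n / fact q) else 0)"
  unfolding heat_monom_def coeff_sum by (intro sum.cong refl) (simp add: coeff_higher_pderiv_fact)

lemma coeff_heat_monom_top [simp]: "coeff (heat_monom n a) n = 1"
proof -
  have "coeff (heat_monom n a) n = (\<Sum>k\<le>n. if k = 0 then 1 else 0)"
    unfolding coeff_heat_monom by (intro sum.cong refl) auto
  then show ?thesis by simp
qed

lemma degree_heat_monom [simp]: "degree (heat_monom n a) = n"
proof (rule antisym)
  show "degree (heat_monom n a) \<le> n"
    by (rule degree_le) (auto simp: coeff_heat_monom intro!: sum.neutral)
  show "n \<le> degree (heat_monom n a)"
    by (rule le_degree) simp
qed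

lemma coeff_heat_monom_pred: "n \<noteq> 0 \<Longrightarrow> coeff (heat_monom n a) (n - 1) = 0"
  unfolding coeff_heat_monom by (intro sum.neutral) presburger

lemma heat_monom_pcompose_scale:
  assumes "c \<noteq> 0"
  shows "pcompose (heat_monom n a) [:0, c:] = smult (c ^ n) (heat_monom n (a / c\<^sup>2))"
proof (rule poly_eqI)
  fix q
  have "c ^ q * (a ^ k / fact k * (fact n / fact q))
      = c ^ n * ((a / c\<^sup>2) ^ k / fact k * (fact n / fact q))" if "q + 2 * k = n" for k
  proof -
    have "c ^ n = c ^ q * (c\<^sup>2) ^ k"
      using that by (simp flip: power_add power_mult)
    then show ?thesis using assms by (simp add: field_simps)
  qed
  then show "coeff (pcompose (heat_monom n a) [:0, c:]) q = coeff (smult (c ^ n) (heat_monom n (a / c\<^sup>2))) q"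
    unfolding coeff_pcompose_linear coeff_smult coeff_heat_monom sum_distrib_left
    by (intro sum.cong refl) simp
qed

lemma ffconv_heat_monom_left:
  "degree g \<le> n \<Longrightarrow> ffconv n (heat_monom n a) g = (\<Sum>k\<le>n. smult (a ^ k / fact k) ((pderiv ^^ (2 * k)) g))"
  unfolding heat_monom_def by (simp add: ffconv_sum ffconv_smult ffconv_higher_pderiv_monom)

lemma ffconv_heat_monom: "ffconv n (heat_monom n a) (heat_monom n b) = heat_monom n (a + b)"
proof -
  define W where "W p = (pderiv ^^ (2 * p)) (monom (1::real) n)" for p
  define f where "f k l = smult (a ^ k / fact k * (b ^ l / fact l)) (W (k + l))" for k l
  have "ffconv n (heat_monom n a) (heat_monom n b) = (\<Sum>k\<le>n. \<Sum>l\<le>n. f k l)"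
    unfolding ffconv_heat_monom_left[OF eq_imp_le[OF degree_heat_monom]]
    unfolding heat_monom_def higher_pderiv_sum higher_pderiv_smult smult_sum_right f_def W_def
    by (simp add: distrib_left funpow_add)
  also have "\<dots> = (\<Sum>(k, l)\<in>{(k, l). k + l \<le> n}. f k l)"
    unfolding sum.cartesian_product
    by (intro sum.mono_neutral_right)
      (auto simp: f_def W_def not_le intro!: higher_pderiv_eq_0 simp: degree_monom_eq)
  also have "\<dots> = (\<Sum>p\<le>n. \<Sum>k\<le>p. f k (p - k))"
    by (rule sum.triangle_reindex_eq)
  also have "\<dots> = (\<Sum>p\<le>n. smult ((a + b) ^ p / fact p) (W p))"
  proof (intro sum.cong refl)
    fix p
    have "(a + b) ^ p / fact p = (\<Sum>k\<le>p. a ^ k / fact k * (b ^ (p - k) / fact (p - k)))"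
      unfolding binomial_ring sum_divide_distrib
      by (intro sum.cong refl) (simp add: binomial_fact field_simps)
    then show "(\<Sum>k\<le>p. f k (p - k)) = smult ((a + b) ^ p / fact p) (W p)"
      by (simp add: f_def smult_sum)
  qed
  also have "\<dots> = heat_monom n (a + b)"
    unfolding heat_monom_def W_def ..
  finally show ?thesis .
qed

lemma higher_pderiv_Suc_x_mult:
  "(pderiv ^^ Suc j) ([:0, 1:] * p) = [:0, 1:] * (pderiv ^^ Suc j) p + smult (of_nat (Suc j)) ((pderiv ^^ j) p)"
  for p :: "real poly"
proof (induction j)
  case 0
  then show ?case by (simp add: pderiv_mult pderiv_pCons)
next
  case (Suc j)
  have "(pderiv ^^ Suc (Suc j)) ([:0, 1:] * p)
      = [:0, 1:] * (pderiv ^^ Suc (Suc j)) p + (pderiv ^^ Suc j) p + smult (of_nat (Suc j)) ((pderiv ^^ Suc j) p)"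
    using Suc by (simp add: pderiv_add pderiv_mult pderiv_smult pderiv_pCons)
  then show ?case
    by (simp only: of_nat_Suc[of "Suc j"] smult_add_left smult_1_left add.assoc)
qed

lemma higher_pderiv_monom_Suc_Suc:
  "(pderiv ^^ (2 * Suc k)) (monom 1 (Suc (Suc n)))
   = [:0, 1:] * (pderiv ^^ (2 * Suc k)) (monom 1 (Suc n))
     + smult (2 * of_nat (Suc k) * of_nat (Suc n)) ((pderiv ^^ (2 * k)) (monom (1::real) n))"
proof -
  have "(pderiv ^^ Suc (2 * k)) (monom (1::real) (Suc n)) = (pderiv ^^ (2 * k)) (pderiv (monom 1 (Suc n)))"
    by (simp add: funpow_swap1)
  also have "\<dots> = (pderiv ^^ (2 * k)) (smult (of_nat (Suc n)) (monom 1 n))"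
    by (simp add: pderiv_monom smult_monom del: of_nat_Suc)
  also have "\<dots> = smult (of_nat (Suc n)) ((pderiv ^^ (2 * k)) (monom 1 n))"
    by (rule higher_pderiv_smult)
  finally have "(pderiv ^^ Suc (2 * k)) (monom (1::real) (Suc n)) = \<dots>" .
  moreover have "monom (1::real) (Suc (Suc n)) = [:0, 1:] * monom 1 (Suc n)"
    by (simp add: monom_Suc)
  moreover have "2 * Suc k = Suc (Suc (2 * k))"
    by simp
  ultimately show ?thesis
    by (simp only: higher_pderiv_Suc_x_mult smult_smult) (simp add: algebra_simps)
qed

lemma heat_monom_Suc_Suc:
  "heat_monom (Suc (Suc n)) a = [:0, 1:] * heat_monom (Suc n) a + smult (2 * a * of_nat (Suc n)) (heat_monom n a)"
proof -
  define c where "c k = a ^ k / fact k" for k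
  define W where "W m k = (pderiv ^^ (2 * k)) (monom (1::real) m)" for m k
  have "c (Suc k) * of_nat (Suc k) = a * c k" for k
    by (simp add: c_def field_simps del: of_nat_Suc)
  then have c_Suc: "c (Suc k) * (2 * of_nat (Suc k) * of_nat (Suc n)) = 2 * a * of_nat (Suc n) * c k" for k
    by (metis mult.assoc mult.commute)
  have step: "smult (c (Suc k)) (W (Suc (Suc n)) (Suc k))
      = [:0, 1:] * smult (c (Suc k)) (W (Suc n) (Suc k)) + smult (2 * a * of_nat (Suc n)) (smult (c k) (W n k))"
    for k unfolding W_def higher_pderiv_monom_Suc_Suc
    by (simp only: smult_add_right smult_smult c_Suc mult_smult_right)
  have "heat_monom (Suc (Suc n)) a = smult (c 0) (W (Suc (Suc n)) 0) + (\<Sum>k\<le>Suc n. smult (c (Suc k)) (W (Suc (Suc n)) (Suc k)))"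
    unfolding heat_monom_def c_def W_def by (rule sum.atMost_Suc_shift)
  also have "\<dots> = [:0, 1:] * (smult (c 0) (W (Suc n) 0) + (\<Sum>k\<le>Suc n. smult (c (Suc k)) (W (Suc n) (Suc k))))
      + smult (2 * a * of_nat (Suc n)) (\<Sum>k\<le>Suc n. smult (c k) (W n k))"
    unfolding step by (simp add: W_def monom_Suc sum.distrib distrib_left sum_distrib_left smult_sum_right
        smult_add_right)
  also have "\<dots> = [:0, 1:] * heat_monom (Suc n) a + smult (2 * a * of_nat (Suc n)) (heat_monom n a)"
    using heat_monom_eq_sum[of "Suc n" "Suc (Suc n)" a] heat_monom_eq_sum[of n "Suc n" a]
    by (simp only: sum.atMost_Suc_shift c_def W_def)
  finally show ?thesis .
qed

lemma hermite_He_eq_heat_monom: "hermite_He n = heat_monom n (-1/2)"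
proof (induction n rule: hermite_He.induct)
  case 1
  then show ?case by (simp add: heat_monom_def)
next
  case 2
  have "(pderiv ^^ 2) (monom (1::real) 1) = 0"
    by (rule higher_pderiv_eq_0) (simp add: degree_monom_eq)
  then show ?case by (simp add: heat_monom_def monom_Suc)
next
  case (3 k)
  have "hermite_He (Suc (Suc k))
      = [:0, 1:] * heat_monom (Suc k) (-1/2) + smult (2 * (-1/2) * of_nat (Suc k)) (heat_monom k (-1/2))"
    by (simp only: hermite_He.simps 3) (simp del: of_nat_Suc)
  then show ?case
    by (simp only: heat_monom_Suc_Suc)
qed

lemma pderiv_heat_monom: "pderiv (heat_monom (Suc m) a) = smult (of_nat (Suc m)) (heat_monom m a)"
proof -
  have "pderiv (heat_monom (Suc m) a)
      = (\<Sum>k\<le>Suc m. smult (a ^ k / fact k) ((pderiv ^^ (2 * k)) (pderiv (monom 1 (Suc m)))))"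
    unfolding heat_monom_def pderiv_sum pderiv_smult by (simp add: funpow_swap1)
  also have "\<dots> = smult (of_nat (Suc m)) (\<Sum>k\<le>Suc m. smult (a ^ k / fact k) ((pderiv ^^ (2 * k)) (monom 1 m)))"
  proof -
    have pm: "pderiv (monom (1::real) (Suc m)) = smult (of_nat (Suc m)) (monom 1 m)"
      by (simp add: pderiv_monom smult_monom del: of_nat_Suc)
    show ?thesis
      unfolding pm higher_pderiv_smult smult_sum_right smult_smult
      by (simp only: mult.commute[of "of_nat (Suc m)"])
  qed
  also have "\<dots> = smult (of_nat (Suc m)) (heat_monom m a)"
    using heat_monom_eq_sum[of m "Suc m" a] by simp
  finally show ?thesis .
qed

lemma pderiv_hermite_He: "pderiv (hermite_He (Suc m)) = smult (of_nat (Suc m)) (hermite_He m)"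
  by (simp only: hermite_He_eq_heat_monom pderiv_heat_monom)

lemma hermite_He_Suc: "hermite_He (Suc n) = [:0, 1:] * hermite_He n - pderiv (hermite_He n)"
  by (cases n) (simp_all only: pderiv_hermite_He hermite_He.simps pderiv_1 diff_0_right mult_1_right)

lemma poly_hermite_He_uminus: "poly (hermite_He n) (- x) = (-1) ^ n * poly (hermite_He n) x"
  by (induction n rule: hermite_He.induct) (simp_all add: algebra_simps)

section \<open>Roots of the Hermite polynomials\<close>

lemma alternating_signs_mult_neg:
  fixes a b :: real
  assumes "(-1) ^ (m - k) * a > 0" "(-1) ^ (m - Suc k) * b > 0" "Suc k \<le> m"
  shows "a * b < 0"
proof -
  define e :: real where "e = (-1) ^ (m - Suc k)"
  have "(-1) ^ (m - k) = - e"
    using assms(3) by (simp add: e_def Suc_diff_Suc[symmetric])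
  then have "- e * a > 0"
    using assms(1) by simp
  moreover have "e * b > 0"
    using assms(2) by (simp add: e_def)
  ultimately have "0 < (- e * a) * (e * b)"
    by (rule mult_pos_pos)
  also have "(- e * a) * (e * b) = - (e * e) * (a * b)"
    by (simp add: algebra_simps)
  also have "e * e = 1"
    by (simp add: e_def flip: power_add)
  finally show ?thesis by simp
qed

lemma sign_hermite_He_Suc_at_roots:
  assumes mono: "strict_mono_on {..<n} \<rho>" and He: "hermite_He n = root_poly n \<rho>" and k: "k < n"
  shows "(-1) ^ (n - k) * poly (hermite_He (Suc n)) (\<rho> k) > 0"
proof -
  have "poly (hermite_He (Suc n)) (\<rho> k) = - poly (root_poly_except n \<rho> k) (\<rho> k)"
    using k by (simp add: hermite_He_Suc He poly_root_poly_eq_0 poly_pderiv_root_poly_at_root)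
  moreover have "(-1::real) ^ (n - k) = - ((-1) ^ (n - Suc k))"
    using k by (simp add: Suc_diff_Suc[symmetric])
  ultimately show ?thesis
    using sign_root_poly_except_at_root[OF mono k] by simp
qed

lemma monic_eq_root_poly_of_alternating_signs:
  fixes p :: "real poly"
  assumes "lead_coeff p = 1" "degree p = N"
    and x_mono: "strict_mono_on {..N} x"
    and x_sign: "\<And>k. k \<le> N \<Longrightarrow> (-1) ^ (N - k) * poly p (x k) > 0"
  obtains z where "strict_mono_on {..<N} z" "p = root_poly N z"
proof (rule monic_eq_root_poly_of_sign_changes[OF assms(1,2)])
  show "x i < x (Suc i)" if "i < N" for i
    using that by (intro strict_mono_onD[OF x_mono]) auto
  show "x (Suc i) \<le> x j" if "i < j" "j < N" for i j
    using that strict_mono_onD[OF x_mono, of "Suc i" j] by (cases "Suc i = j") auto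
  show "poly p (x i) * poly p (x (Suc i)) < 0" if "i < N" for i
    using that x_sign[of i] x_sign[of "Suc i"] by (intro alternating_signs_mult_neg) auto
qed (use that in blast)

lemma monic_pos_beyond_points:
  fixes p :: "real poly" and \<rho> :: "nat \<Rightarrow> real"
  assumes "lead_coeff p = 1"
  obtains X where "0 < X" "poly p X > 0" "\<And>i. i < n \<Longrightarrow> - X < \<rho> i \<and> \<rho> i < X"
proof -
  obtain N where N: "\<And>x. N \<le> x \<Longrightarrow> 1 \<le> poly p x"
    using poly_pinfty_gt_lc[of p] assms by auto
  define X where "X = max N (1 + (\<Sum>i<n. \<bar>\<rho> i\<bar>))"
  have "- X < \<rho> i \<and> \<rho> i < X" if "i < n" for i
  proof -
    have "\<bar>\<rho> i\<bar> \<le> (\<Sum>i<n. \<bar>\<rho> i\<bar>)"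
      using that by (intro member_le_sum) auto
    moreover have "1 + (\<Sum>i<n. \<bar>\<rho> i\<bar>) \<le> X"
      by (simp add: X_def)
    ultimately show ?thesis by linarith
  qed
  moreover have "0 < X"
    by (simp add: X_def sum_nonneg add_pos_nonneg max.strict_coboundedI2)
  moreover have "poly p X > 0"
    using N[of X] by (simp add: X_def)
  ultimately show ?thesis
    using that by blast
qed

lemma hermite_He_Suc_alternating_points:
  assumes mono: "strict_mono_on {..<n} \<rho>" and He: "hermite_He n = root_poly n \<rho>"
  obtains x where "strict_mono_on {..Suc n} x"
    "\<And>k. k \<le> Suc n \<Longrightarrow> (-1) ^ (Suc n - k) * poly (hermite_He (Suc n)) (x k) > 0"
proof -
  define H where "H = hermite_He (Suc n)"
  have "lead_coeff H = 1"
    by (simp add: H_def hermite_He_eq_heat_monom)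
  then obtain X where "0 < X" and X_pos: "poly H X > 0"
    and X_bound: "\<And>i. i < n \<Longrightarrow> - X < \<rho> i \<and> \<rho> i < X"
    using monic_pos_beyond_points by blast
  define x where "x k = (if k = 0 then - X else if k \<le> n then \<rho> (k - 1) else X)" for k
  have "strict_mono_on {..Suc n} x"
  proof (rule strict_mono_onI)
    fix k l assume kl: "k \<in> {..Suc n}" "l \<in> {..Suc n}" "k < l"
    show "x k < x l"
    proof (cases "l \<le> n")
      case True
      then have "- X < \<rho> (l - 1)" "k \<noteq> 0 \<Longrightarrow> \<rho> (k - 1) < \<rho> (l - 1)"
        using kl X_bound[of "l - 1"] strict_mono_onD[OF mono, of "k - 1" "l - 1"] by auto
      then show ?thesis
        using kl True by (simp add: x_def)
    next
      case False
      then have "k \<noteq> 0 \<Longrightarrow> k \<le> n \<Longrightarrow> \<rho> (k - 1) < X"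
        using X_bound[of "k - 1"] by auto
      then show ?thesis
        using kl False \<open>0 < X\<close> by (auto simp: x_def)
    qed
  qed
  moreover have "(-1) ^ (Suc n - k) * poly H (x k) > 0" if k: "k \<le> Suc n" for k
  proof -
    consider "k = 0" | "0 < k" "k \<le> n" | "k = Suc n"
      using k by (metis le_SucE neq0_conv)
    then show ?thesis
    proof cases
      case 1
      then show ?thesis
        using X_pos by (simp add: x_def H_def poly_hermite_He_uminus flip: power_add)
    next
      case 2
      then show ?thesis
        using sign_hermite_He_Suc_at_roots[OF mono He, of "k - 1"] by (simp add: x_def H_def)
    next
      case 3
      then show ?thesis using X_pos by (simp add: x_def)
    qed
  qed
  ultimately show ?thesis
    unfolding H_def by (rule that)
qed

lemma hermite_He_real_rooted:
  obtains \<rho> where "strict_mono_on {..<n} \<rho>" "hermite_He n = root_poly n \<rho>"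
proof (induction n arbitrary: thesis)
  case 0
  then show ?case by (simp add: root_poly_def)
next
  case (Suc n)
  obtain \<rho> where "strict_mono_on {..<n} \<rho>" "hermite_He n = root_poly n \<rho>"
    using Suc.IH by blast
  then obtain x where "strict_mono_on {..Suc n} x"
    "\<And>k. k \<le> Suc n \<Longrightarrow> (-1) ^ (Suc n - k) * poly (hermite_He (Suc n)) (x k) > 0"
    by (rule hermite_He_Suc_alternating_points) blast
  moreover have "lead_coeff (hermite_He (Suc n)) = 1" "degree (hermite_He (Suc n)) = Suc n"
    by (simp_all only: hermite_He_eq_heat_monom degree_heat_monom coeff_heat_monom_top)
  ultimately show ?case
    using monic_eq_root_poly_of_alternating_signs Suc.prems by metis
qed

lemma herm_norm_eq_scaled_roots:
  assumes n: "2 \<le> n" and mono: "strict_mono_on {..<n} \<rho>" and He: "hermite_He n = root_poly n \<rho>"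
  obtains c where "c > 0" "\<And>i. i < n \<Longrightarrow> herm_norm n i = \<rho> i / c"
proof -
  have sr: "sorted_roots (hermite_He n) i = \<rho> i" if "i < n" for i
    using sorted_roots_root_poly[OF mono that] He by simp
  have "coeff (hermite_He n) (n - 1) = 0"
    using n coeff_heat_monom_pred[of n "-1/2"] by (simp add: hermite_He_eq_heat_monom)
  then have mean: "(\<Sum>i<n. \<rho> i) = 0"
    using n He coeff_root_poly_pred[of "n - 1" \<rho>] by simp
  have "\<rho> 0 \<noteq> \<rho> 1"
    using strict_mono_onD[OF mono, of 0 1] n by auto
  then have "0 < (\<Sum>i\<in>{0, 1}. (\<rho> i)\<^sup>2)"
    by (auto simp: sum_power2_gt_zero_iff)
  also have "\<dots> \<le> (\<Sum>i<n. (\<rho> i)\<^sup>2)"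
    using n by (intro sum_mono2) auto
  finally have "0 < sqrt ((\<Sum>i<n. (\<rho> i)\<^sup>2) / real n)"
    using n by simp
  moreover have "herm_norm n i = \<rho> i / sqrt ((\<Sum>i<n. (\<rho> i)\<^sup>2) / real n)" if "i < n" for i
    using that sr mean by (simp add: herm_norm_def Let_def)
  ultimately show ?thesis using that by blast
qed

lemma herm_norm_heat_monom:
  assumes n: "2 \<le> n"
  obtains a where "strict_mono_on {..<n} (herm_norm n)" "heat_monom n a = root_poly n (herm_norm n)"
proof -
  obtain \<rho> where mono: "strict_mono_on {..<n} \<rho>" and He: "hermite_He n = root_poly n \<rho>"
    by (rule hermite_He_real_rooted)
  obtain c where c: "c > 0" and h: "\<And>i. i < n \<Longrightarrow> herm_norm n i = \<rho> i / c"
    using herm_norm_eq_scaled_roots[OF n mono He] by blast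
  have "strict_mono_on {..<n} (herm_norm n)"
    using mono c by (auto simp: strict_mono_on_def h divide_strict_right_mono)
  moreover have "root_poly n (herm_norm n) = root_poly n (\<lambda>i. \<rho> i / c)"
    by (simp add: root_poly_def h)
  moreover have "smult (c ^ n) (root_poly n (\<lambda>i. \<rho> i / c)) = smult (c ^ n) (heat_monom n (-1/2 / c\<^sup>2))"
    using c pcompose_root_poly_scale[of c n \<rho>] heat_monom_pcompose_scale[of c n "-1/2"]
    by (simp add: He hermite_He_eq_heat_monom flip: He)
  then have "root_poly n (\<lambda>i. \<rho> i / c) = heat_monom n (-1/2 / c\<^sup>2)"
    by (rule smult_cancel[rotated]) (use c in simp)
  ultimately show ?thesis
    using that by simp
qed

lemma ffconv_self_heat_monom:
  assumes R: "heat_monom n a = root_poly n h" and inj: "inj_on h {..<n}"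
  shows "ffconv n (root_poly n h) (root_poly n h) = root_poly n (\<lambda>i. sqrt 2 * h i)"
proof (rule monic_eq_root_poly_of_roots)
  have A: "ffconv n (root_poly n h) (root_poly n h) = heat_monom n (a + a)"
    by (simp add: ffconv_heat_monom flip: R)
  then show "lead_coeff (ffconv n (root_poly n h) (root_poly n h)) = 1"
    and "degree (ffconv n (root_poly n h) (root_poly n h)) = n"
    by simp_all
  show "inj_on (\<lambda>i. sqrt 2 * h i) {..<n}"
    using inj by (auto simp: inj_on_def)
  fix i assume "i < n"
  have "poly (ffconv n (root_poly n h) (root_poly n h)) (sqrt 2 * h i)
      = poly (pcompose (heat_monom n (a + a)) [:0, sqrt 2:]) (h i)"
    by (simp add: A poly_pcompose mult.commute)
  also have "\<dots> = sqrt 2 ^ n * poly (root_poly n h) (h i)"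
    by (simp add: heat_monom_pcompose_scale R)
  also have "\<dots> = 0"
    using \<open>i < n\<close> by (simp add: poly_root_poly_eq_0)
  finally show "poly (ffconv n (root_poly n h) (root_poly n h)) (sqrt 2 * h i) = 0" .
qed

section \<open>The Hermite coupling matrix\<close>

lemma root_poly_perturb:
  assumes j: "j < n"
  shows "root_poly n (perturb \<alpha> j t) = root_poly n \<alpha> - smult t (root_poly_except n \<alpha> j)"
proof -
  have "root_poly_except n (perturb \<alpha> j t) j = root_poly_except n \<alpha> j"
    unfolding root_poly_except_def by (intro prod.cong refl) (simp add: perturb_def)
  then have "root_poly n (perturb \<alpha> j t) = [:- \<alpha> j - t, 1:] * root_poly_except n \<alpha> j"
    using root_poly_split[OF j, of "perturb \<alpha> j t"] by (simp add: perturb_def)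
  also have "[:- \<alpha> j - t, 1:] = [:- \<alpha> j, 1:] - [:t:]"
    by simp
  also have "([:- \<alpha> j, 1:] - [:t:]) * root_poly_except n \<alpha> j
      = root_poly n \<alpha> - smult t (root_poly_except n \<alpha> j)"
    unfolding root_poly_split[OF j] left_diff_distrib by simp
  finally show ?thesis .
qed

lemma Omega_perturb:
  assumes "j < n"
  shows "Omega n (perturb \<alpha> j t) \<beta> = sorted_roots (ffconv n (root_poly n \<alpha>) (root_poly n \<beta>)
      - smult t (ffconv n (root_poly_except n \<alpha> j) (root_poly n \<beta>)))"
  by (simp add: Omega_def root_poly_perturb[OF assms] ffconv_diff ffconv_smult)

lemma degree_ffconv_root_poly_except:
  assumes j: "j < n"
  shows "degree (ffconv n (root_poly_except n \<alpha> j) g) < n"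
proof (rule degree_lessI)
  show "ffconv n (root_poly_except n \<alpha> j) g \<noteq> 0 \<or> 0 < n"
    using j by simp
  have "coeff (root_poly_except n \<alpha> j) n = 0"
    using j by (simp add: coeff_eq_0 degree_root_poly_except)
  then show "\<forall>k\<ge>n. coeff (ffconv n (root_poly_except n \<alpha> j) g) k = 0"
    using degree_ffconv[of n "root_poly_except n \<alpha> j" g]
    by (auto simp: le_less coeff_ffconv_top coeff_eq_0)
qed

lemma Omega_perturb_has_derivative:
  assumes conv: "ffconv n (root_poly n \<alpha>) (root_poly n \<beta>) = root_poly n y"
    and mono: "strict_mono_on {..<n} y" and i: "i < n" and j: "j < n"
  shows "((\<lambda>t. Omega n (perturb \<alpha> j t) \<beta> i) has_real_derivative
    poly (ffconv n (root_poly_except n \<alpha> j) (root_poly n \<beta>)) (y i) / poly (root_poly_except n y i) (y i))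
    (at 0)"
  unfolding Omega_perturb[OF j] conv
  using mono degree_ffconv_root_poly_except[OF j] i by (rule sorted_roots_diff_smult_has_derivative)

lemma sum_deriv_Omega_perturb_score:
  assumes conv: "ffconv n (root_poly n \<alpha>) (root_poly n \<beta>) = root_poly n y"
    and mono: "strict_mono_on {..<n} y" and inj: "inj_on \<alpha> {..<n}" and i: "i < n"
  shows "(\<Sum>j<n. deriv (\<lambda>t. Omega n (perturb \<alpha> j t) \<beta> i) 0 * score n \<alpha> j) = score n y i"
proof -
  define B where "B j = ffconv n (root_poly_except n \<alpha> j) (root_poly n \<beta>)" for j
  define Q where "Q = root_poly_except n y i"
  have Q_nonzero: "poly Q (y i) \<noteq> 0"
    unfolding Q_def using strict_mono_on_imp_inj_on[OF mono] i by (rule poly_root_poly_except_nonzero)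
  have "(\<Sum>j<n. smult (score n \<alpha> j) (B j))
      = ffconv n (\<Sum>j<n. smult (score n \<alpha> j) (root_poly_except n \<alpha> j)) (root_poly n \<beta>)"
    by (simp add: B_def ffconv_sum ffconv_smult)
  also have "\<dots> = smult (1/2) (pderiv (pderiv (root_poly n y)))"
    by (simp add: sum_score_smult_root_poly_except[OF inj] ffconv_smult ffconv_pderiv degree_pderiv
        flip: conv)
  finally have sum_B: "(\<Sum>j<n. smult (score n \<alpha> j) (B j)) = smult (1/2) (pderiv (pderiv (root_poly n y)))" .
  have "(\<Sum>j<n. score n \<alpha> j * poly (B j) (y i)) = poly (\<Sum>j<n. smult (score n \<alpha> j) (B j)) (y i)"
    by (simp add: poly_sum)
  also have "\<dots> = poly (smult (1/2) (pderiv (pderiv (root_poly n y)))) (y i)"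
    by (simp only: sum_B)
  also have "\<dots> = poly Q (y i) * score n y i"
    using poly_pderiv2_root_poly_at_root[OF strict_mono_on_imp_inj_on[OF mono] i] by (simp add: Q_def)
  finally have "(\<Sum>j<n. score n \<alpha> j * poly (B j) (y i)) = poly Q (y i) * score n y i" .
  moreover have "deriv (\<lambda>t. Omega n (perturb \<alpha> j t) \<beta> i) 0 = poly (B j) (y i) / poly Q (y i)"
    if "j < n" for j
    unfolding B_def Q_def using Omega_perturb_has_derivative[OF conv mono i that] by (rule DERIV_imp_deriv)
  ultimately show ?thesis
    using Q_nonzero by (simp add: sum_divide_distrib[symmetric] mult.commute)
qed

theorem mainTheorem2:
  fixes n :: nat
  assumes "n \<ge> 2"
  shows "(\<forall>i<n. \<forall>j<n.
            (\<lambda>t. Omega n (perturb (herm_norm n) j t) (herm_norm n) i) differentiable (at 0))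
       \<and> (\<forall>i<n. (\<Sum>j<n. hermite_coupling n i j * score n (herm_norm n) j)
                 = 2 powr (-1/2) * score n (herm_norm n) i)"
proof -
  define h where "h = herm_norm n"
  obtain a where mono: "strict_mono_on {..<n} h" and R: "heat_monom n a = root_poly n h"
    using herm_norm_heat_monom[OF assms] unfolding h_def by blast
  have inj: "inj_on h {..<n}"
    using mono by (rule strict_mono_on_imp_inj_on)
  have conv: "ffconv n (root_poly n h) (root_poly n h) = root_poly n (\<lambda>i. sqrt 2 * h i)"
    using R inj by (rule ffconv_self_heat_monom)
  have mono_y: "strict_mono_on {..<n} (\<lambda>i. sqrt 2 * h i)"
    using mono by (simp add: strict_mono_on_def)
  have "(\<lambda>t. Omega n (perturb h j t) h i) differentiable (at 0)" if "i < n" "j < n" for i j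
    using Omega_perturb_has_derivative[OF conv mono_y that]
    by (auto intro: differentiableI has_field_derivative_imp_has_derivative)
  moreover have "(\<Sum>j<n. hermite_coupling n i j * score n h j) = 2 powr (-1/2) * score n h i"
    if "i < n" for i
    using sum_deriv_Omega_perturb_score[OF conv mono_y inj that]
    by (simp add: hermite_coupling_def score_scale powr_minus_divide powr_half_sqrt flip: h_def)
  ultimately show ?thesis
    unfolding h_def by blast
qed

end
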